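(* Let $(X_j,Y_j,S_j)$, $j\in\mathbb{Z}$, be a FAIM process, and let $H_\infty$ be the almost-sure limit of its conditional entropy process $H_n$ (a $\{0,1\}$-valued random variable). Then: (1) $Z_n$ and $\hat Z_n$ polarize to random variables $Z_\infty$ and $\hat Z_\infty$, respectively, and $Z_\infty=\hat Z_\infty=H_\infty$ almost surely; (2) $K_n$ and $\hat K_n$ polarize to random variables $K_\infty$ and $\hat K_\infty$, respectively, and $K_\infty=\hat K_\infty=1-H_\infty$ almost surely.
   Context: FAIM process: $(X_j,Y_j,S_j)$, $j\in\mathbb{Z}$, is strictly stationary, $X_j\in\{0,1\}$, $Y_j$ takes values in a finite alphabet, $S_j$ in a finite set $\mathcal{S}$; the conditional law $P_{X_j,Y_j,S_j|S_{j-1}}$ does not depend on $j$; and conditioned on $S_{j-1}$, $\{X_k,Y_k,S_k\}_{k\ge j}$ is independent of $\{X_l,Y_l,S_{l-1}\}_{l<j}$. The state sequence $(S_j)$ is a homogeneous, finite-state, stationary, aperiodic and irreducible Markov chain. For binary $U$ and finite-valued $Q$: $Z(U|Q)=2\sum_q\sqrt{P_{U,Q}(0,q)P_{U,Q}(1,q)}$, $K(U|Q)=\sum_q|P_{U,Q}(0,q)-P_{U,Q}(1,q)|$, $H(U|Q)$ conditional entropy in bits; conditioning on several variables means using their tuple as the observation. Polarization setup: $N=2^n$, $G_N=B_NG_2^{\otimes n}$ with $G_2=\begin{bmatrix}1&0\\1&1\end{bmatrix}$ and $B_N$ the bit-reversal permutation matrix (arithmetic mod 2); $U_1^N=X_1^NG_N$,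 $Q_i=(U_1^{i-1},Y_1^N)$; $B_1,B_2,\dots$ i.i.d. Bernoulli$(1/2)$, $i-1=\sum_{j=1}^nB_j2^{n-j}$. Processes: $H_n=H(U_i|Q_i)$, $Z_n=Z(U_i|Q_i)$, $K_n=K(U_i|Q_i)$, and boundary-state-informed versions $\hat Z_n=Z(U_i|Q_i,S_N,S_0)$, $\hat K_n=K(U_i|Q_i,S_N,S_0)$. A $[0,1]$-valued sequence polarizes if it converges almost surely to a $\{0,1\}$-valued random variable. *)

theory Defs
  imports "HOL-Probability.Probability"
begin

definition Pev :: "'w measure \<Rightarrow> ('w \<Rightarrow> bool) \<Rightarrow> real" where
  "Pev M P = measure M {w \<in> space M. P w}"

text \<open>The triple (X_j, Y_j, S_j); bits X_j are encoded as bool (False = 0, True = 1).\<close>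
definition trip :: "(int \<Rightarrow> 'w \<Rightarrow> bool) \<Rightarrow> (int \<Rightarrow> 'w \<Rightarrow> 'y) \<Rightarrow> (int \<Rightarrow> 'w \<Rightarrow> 's)
    \<Rightarrow> int \<Rightarrow> 'w \<Rightarrow> bool \<times> 'y \<times> 's" where
  "trip X Y S j w = (X j w, Y j w, S j w)"

text \<open>Strict stationarity of a discrete-valued process, via all finite-dimensional
  distributions of contiguous windows (which determine all finite-dimensional laws).\<close>
definition strictly_stationary :: "'w measure \<Rightarrow> (int \<Rightarrow> 'w \<Rightarrow> 'a) \<Rightarrow> bool" where
  "strictly_stationary M Z \<longleftrightarrow>
     (\<forall>k a (m::nat) (v :: nat \<Rightarrow> 'a).
        Pev M (\<lambda>w. \<forall>i<m. Z (a + k + int i) w = v i) = Pev M (\<lambda>w. \<forall>i<m. Z (a + int i) w = v i))"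

text \<open>The state set is taken to be the set of states of
  positive probability, on which irreducibility and aperiodicity are required.\<close>
definition state_chain_ok :: "'w measure \<Rightarrow> (int \<Rightarrow> 'w \<Rightarrow> 's::finite) \<Rightarrow> bool" where
  "state_chain_ok M S \<longleftrightarrow>
     \<comment> \<open>Markov property\<close>
     (\<forall>j (n::nat) (v :: nat \<Rightarrow> 's) b. n > 0 \<longrightarrow>
        Pev M (\<lambda>w. S j w = b \<and> (\<forall>i<n. S (j - 1 - int i) w = v i)) * Pev M (\<lambda>w. S (j - 1) w = v 0)
        = Pev M (\<lambda>w. S j w = b \<and> S (j - 1) w = v 0) * Pev M (\<lambda>w. \<forall>i<n. S (j - 1 - int i) w = v i)) \<and>
     \<comment> \<open>homogeneity\<close>
     (\<forall>j k a b. Pev M (\<lambda>w. S j w = b \<and> S (j - 1) w = a) * Pev M (\<lambda>w. S (k - 1) w = a)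
              = Pev M (\<lambda>w. S k w = b \<and> S (k - 1) w = a) * Pev M (\<lambda>w. S (j - 1) w = a)) \<and>
     \<comment> \<open>stationarity\<close>
     (\<forall>j s. Pev M (\<lambda>w. S j w = s) = Pev M (\<lambda>w. S 0 w = s)) \<and>
     \<comment> \<open>irreducibility\<close>
     (\<forall>a b. Pev M (\<lambda>w. S 0 w = a) > 0 \<and> Pev M (\<lambda>w. S 0 w = b) > 0 \<longrightarrow>
        (\<exists>n::nat. n > 0 \<and> Pev M (\<lambda>w. S 0 w = a \<and> S (int n) w = b) > 0)) \<and>
     \<comment> \<open>aperiodicity: every state has period 1\<close>
     (\<forall>a. Pev M (\<lambda>w. S 0 w = a) > 0 \<longrightarrow>
        Gcd {n::nat. n > 0 \<and> Pev M (\<lambda>w. S 0 w = a \<and> S (int n) w = a) > 0} = 1)"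

definition faim :: "'w measure \<Rightarrow> (int \<Rightarrow> 'w \<Rightarrow> bool) \<Rightarrow> (int \<Rightarrow> 'w \<Rightarrow> 'y::finite)
    \<Rightarrow> (int \<Rightarrow> 'w \<Rightarrow> 's::finite) \<Rightarrow> bool" where
  "faim M X Y S \<longleftrightarrow>
     prob_space M \<and>
     (\<forall>j. X j \<in> measurable M (count_space UNIV) \<and> Y j \<in> measurable M (count_space UNIV)
          \<and> S j \<in> measurable M (count_space UNIV)) \<and>
     strictly_stationary M (trip X Y S) \<and>
     \<comment> \<open>the conditional law of (X_j,Y_j,S_j) given S_{j-1} does not depend on j\<close>
     (\<forall>j k v s. Pev M (\<lambda>w. trip X Y S j w = v \<and> S (j - 1) w = s) * Pev M (\<lambda>w. S (k - 1) w = s)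
              = Pev M (\<lambda>w. trip X Y S k w = v \<and> S (k - 1) w = s) * Pev M (\<lambda>w. S (j - 1) w = s)) \<and>
     \<comment> \<open>given S_{j-1}, the future (X_k,Y_k,S_k)_{k>=j} is independent of the past
         (X_l,Y_l,S_{l-1})_{l<j}  (all finite windows)\<close>
     (\<forall>j (m::nat) (n::nat) (f :: nat \<Rightarrow> bool \<times> 'y \<times> 's) (p :: nat \<Rightarrow> bool \<times> 'y \<times> 's) s.
        Pev M (\<lambda>w. (\<forall>i<m. trip X Y S (j + int i) w = f i)
                 \<and> (\<forall>i<n. (X (j - 1 - int i) w, Y (j - 1 - int i) w, S (j - 2 - int i) w) = p i)
                 \<and> S (j - 1) w = s) * Pev M (\<lambda>w. S (j - 1) w = s)
        = Pev M (\<lambda>w. (\<forall>i<m. trip X Y S (j + int i) w = f i) \<and> S (j - 1) w = s)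
          * Pev M (\<lambda>w. (\<forall>i<n. (X (j - 1 - int i) w, Y (j - 1 - int i) w, S (j - 2 - int i) w) = p i)
                 \<and> S (j - 1) w = s)) \<and>
     state_chain_ok M S"

definition jp :: "'w measure \<Rightarrow> ('w \<Rightarrow> bool) \<Rightarrow> ('w \<Rightarrow> 'q) \<Rightarrow> bool \<Rightarrow> 'q \<Rightarrow> real" where
  "jp M U Q u q = Pev M (\<lambda>w. U w = u \<and> Q w = q)"

definition Zc :: "'w measure \<Rightarrow> ('w \<Rightarrow> bool) \<Rightarrow> ('w \<Rightarrow> 'q) \<Rightarrow> real" where
  "Zc M U Q = 2 * (\<Sum>q\<in>Q ` space M. sqrt (jp M U Q False q * jp M U Q True q))"

definition Kc :: "'w measure \<Rightarrow> ('w \<Rightarrow> bool) \<Rightarrow> ('w \<Rightarrow> 'q) \<Rightarrow> real" where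
  "Kc M U Q = (\<Sum>q\<in>Q ` space M. \<bar>jp M U Q False q - jp M U Q True q\<bar>)"

definition Hc :: "'w measure \<Rightarrow> ('w \<Rightarrow> bool) \<Rightarrow> ('w \<Rightarrow> 'q) \<Rightarrow> real" where
  "Hc M U Q = (\<Sum>q\<in>Q ` space M. \<Sum>u\<in>(UNIV::bool set).
      (if jp M U Q u q = 0 then 0
       else - jp M U Q u q * log 2 (jp M U Q u q / Pev M (\<lambda>w. Q w = q))))"

text \<open>Matrices over GF(2) as functions from (row, column) indices (0-based) to bool.\<close>
definition G2 :: "nat \<Rightarrow> nat \<Rightarrow> bool" where
  "G2 r c = (c = 0 \<or> r = 1)"   \<comment> \<open>[[1,0],[1,1]]\<close>

text \<open>Kronecker power: G2^{(n+1)} = G2 \<otimes> G2^{n}.\<close>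
fun kron_pow :: "nat \<Rightarrow> nat \<Rightarrow> nat \<Rightarrow> bool" where
  "kron_pow 0 r c = True"
| "kron_pow (Suc n) r c = (G2 (r div 2 ^ n) (c div 2 ^ n) \<and> kron_pow n (r mod 2 ^ n) (c mod 2 ^ n))"

definition bitrev :: "nat \<Rightarrow> nat \<Rightarrow> nat" where
  "bitrev n a = (\<Sum>j<n. if bit a j then 2 ^ (n - 1 - j) else 0)"

definition BN :: "nat \<Rightarrow> nat \<Rightarrow> nat \<Rightarrow> bool" where
  "BN n r c = (c = bitrev n r)"

text \<open>G_N = B_N G_2^{\<otimes>n}, product mod 2.\<close>
definition GN :: "nat \<Rightarrow> nat \<Rightarrow> nat \<Rightarrow> bool" where
  "GN n r c = odd (card {b. b < 2 ^ n \<and> BN n r b \<and> kron_pow n b c})"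

text \<open>Entry c (0-based) of the row vector x G_N, x indexed 0..N-1.\<close>
definition polar_U :: "nat \<Rightarrow> (nat \<Rightarrow> bool) \<Rightarrow> nat \<Rightarrow> bool" where
  "polar_U n x c = odd (card {a. a < 2 ^ n \<and> x a \<and> GN n a c})"

text \<open>U_{c+1} as a random variable (x_a = X_{a+1}); Q_{c+1} = (U_1^{c}, Y_1^N);
  hat version adds (S_N, S_0).\<close>
definition Urv :: "(int \<Rightarrow> 'w \<Rightarrow> bool) \<Rightarrow> nat \<Rightarrow> nat \<Rightarrow> 'w \<Rightarrow> bool" where
  "Urv X n c w = polar_U n (\<lambda>a. X (int a + 1) w) c"

definition Qrv :: "(int \<Rightarrow> 'w \<Rightarrow> bool) \<Rightarrow> (int \<Rightarrow> 'w \<Rightarrow> 'y) \<Rightarrow> nat \<Rightarrow> nat \<Rightarrow> 'w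
    \<Rightarrow> bool list \<times> 'y list" where
  "Qrv X Y n c w = (map (\<lambda>k. Urv X n k w) [0..<c], map (\<lambda>a. Y (int a + 1) w) [0..<2 ^ n])"

definition Qhat :: "(int \<Rightarrow> 'w \<Rightarrow> bool) \<Rightarrow> (int \<Rightarrow> 'w \<Rightarrow> 'y) \<Rightarrow> (int \<Rightarrow> 'w \<Rightarrow> 's)
    \<Rightarrow> nat \<Rightarrow> nat \<Rightarrow> 'w \<Rightarrow> (bool list \<times> 'y list) \<times> 's \<times> 's" where
  "Qhat X Y S n c w = (Qrv X Y n c w, S (2 ^ n) w, S 0 w)"

text \<open>b j = B_{j+1}; i - 1 = sum_{j=1}^n B_j 2^{n-j}.\<close>
definition idx :: "nat \<Rightarrow> (nat \<Rightarrow> bool) \<Rightarrow> nat" where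
  "idx n b = (\<Sum>j<n. if b j then 2 ^ (n - 1 - j) else 0)"

definition coin :: "(nat \<Rightarrow> bool) measure" where
  "coin = PiM UNIV (\<lambda>_::nat. measure_pmf (bernoulli_pmf (1/2)))"

definition Hproc where
  "Hproc M X Y n b = Hc M (Urv X n (idx n b)) (Qrv X Y n (idx n b))"
definition Zproc where
  "Zproc M X Y n b = Zc M (Urv X n (idx n b)) (Qrv X Y n (idx n b))"
definition Kproc where
  "Kproc M X Y n b = Kc M (Urv X n (idx n b)) (Qrv X Y n (idx n b))"
definition Zhat_proc where
  "Zhat_proc M X Y S n b = Zc M (Urv X n (idx n b)) (Qhat X Y S n (idx n b))"
definition Khat_proc where
  "Khat_proc M X Y S n b = Kc M (Urv X n (idx n b)) (Qhat X Y S n (idx n b))"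

definition polarizes :: "'b measure \<Rightarrow> (nat \<Rightarrow> 'b \<Rightarrow> real) \<Rightarrow> ('b \<Rightarrow> real) \<Rightarrow> bool" where
  "polarizes C f L \<longleftrightarrow> L \<in> borel_measurable C \<and>
     (AE b in C. (\<lambda>n. f n b) \<longlonglongrightarrow> L b) \<and> (AE b in C. L b \<in> {0, 1})"

end

(*
  Z, K and H of a binary U given an observation Q satisfy 1 - K \<le> Z, 1 - 2H \<le> K and, for every
  e > 0, Z \<le> e + H/e and K \<le> e + 6(1 - H)/e (termwise AM-GM together with elementary bounds on
  the binary entropy). Hence along any index path on which H_n tends to 0 or 1, Z_n tends to the
  same limit and K_n to the opposite one.

  For the boundary-informed versions, adding (S_N, S_0) to Q_i lowers H(U_i|Q_i) by a nonnegative
  gap. By the chain rule the gaps telescope: summed over i they are at most the entropy of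
  (S_N, S_0), i.e. log |S|^2. So the expected gap at the random index i is at most 2^-n log |S|^2,
  which is summable in n; the gap therefore tends to 0 almost surely and the hatted processes
  inherit the limit H_inf.
*)
theory Submission
  imports Defs
begin

section \<open>Pointwise bounds between Z, K and H\<close>

lemma ln_le_2_diff_div_sum:
  fixes y :: real assumes "0 < y" "y \<le> 1"
  shows "ln y \<le> 2 * (y - 1) / (y + 1)"
proof -
  let ?g = "\<lambda>x::real. ln x - 2 * (x - 1) / (x + 1)"
  have "?g y \<le> ?g 1"
  proof (rule DERIV_nonneg_imp_nondecreasing[OF assms(2)])
    fix x :: real assume "y \<le> x" "x \<le> 1"
    with assms have x: "0 < x" by linarith
    have "DERIV ?g x :> 1 / x - 4 / (x + 1)^2"
      using x by (auto intro!: derivative_eq_intros simp: field_simps power2_eq_square)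
    moreover have "4 / (x + 1)^2 \<le> 1 / x"
      using x sum_squares_ge_zero[of "x - 1" 0] by (simp add: field_simps power2_eq_square)
    ultimately show "\<exists>d. DERIV ?g x :> d \<and> 0 \<le> d" by force
  qed
  then show ?thesis by simp
qed

(* The term of H(U|Q) belonging to one value q of Q, for a = P(U=0,Q=q) and b = P(U=1,Q=q). *)
definition pair_entropy :: "real \<Rightarrow> real \<Rightarrow> real" where
  "pair_entropy a b = (if a = 0 then 0 else - a * log 2 (a / (a + b)))
                    + (if b = 0 then 0 else - b * log 2 (b / (a + b)))"

lemma pair_entropy_commute: "pair_entropy a b = pair_entropy b a"
  unfolding pair_entropy_def by (simp add: add.commute)

lemma le_pair_entropy_of_le:
  assumes "0 \<le> a" "a \<le> b"
  shows "a \<le> pair_entropy a b"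
proof (cases "a = 0")
  case True
  then show ?thesis by (simp add: pair_entropy_def)
next
  case False
  with assms have a: "0 < a" and b: "0 < b" by auto
  have "log 2 (a / (a + b)) \<le> log 2 (1 / 2)"
    using a b assms by (subst log_le_cancel_iff) (auto simp: field_simps)
  then have "log 2 (a / (a + b)) \<le> - 1" by (simp add: log_divide)
  then have "a * 1 \<le> a * - log 2 (a / (a + b))"
    using a by (intro mult_left_mono) auto
  moreover have "0 \<le> - b * log 2 (b / (a + b))"
    using a b by (simp add: mult_le_0_iff)
  ultimately show ?thesis using a b by (simp add: pair_entropy_def)
qed

lemma min_le_pair_entropy:
  assumes "0 \<le> a" "0 \<le> b"
  shows "min a b \<le> pair_entropy a b"
  using le_pair_entropy_of_le[of a b] le_pair_entropy_of_le[of b a] assms pair_entropy_commute[of a b]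
  by (cases "a \<le> b") auto

lemma pair_entropy_nats_le:
  fixes a b :: real assumes "0 < b" "b \<le> a"
  shows "- a * ln (a / (a + b)) - b * ln (b / (a + b))
    \<le> (a + b) * ln 2 - (a - b)^2 / (2 * (3 * a + b))"
proof -
  have a: "0 < a" using assms by linarith
  have "ln ((a + b) / (2 * a)) \<le> 2 * ((a + b) / (2 * a) - 1) / ((a + b) / (2 * a) + 1)"
    using assms a by (intro ln_le_2_diff_div_sum) auto
  also have "\<dots> = 2 * (b - a) / (3 * a + b)"
    using a assms by (simp add: divide_simps)
  finally have "ln ((a + b) / (2 * a)) \<le> 2 * (b - a) / (3 * a + b)" .
  moreover have "- ln (a / (a + b)) = ln 2 + ln ((a + b) / (2 * a))"
    using a assms by (simp add: ln_div ln_mult)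
  ultimately have "a * - ln (a / (a + b)) \<le> a * (ln 2 + 2 * (b - a) / (3 * a + b))"
    using a by (intro mult_left_mono) auto
  then have A: "- a * ln (a / (a + b)) \<le> a * ln 2 + a * (2 * (b - a) / (3 * a + b))"
    by (simp add: algebra_simps)
  have "ln ((a + b) / (2 * b)) \<le> (a + b) / (2 * b) - 1"
    using assms by (intro ln_le_minus_one) auto
  then have B: "- b * ln (b / (a + b)) \<le> b * ln 2 + (a - b) / 2"
    using a assms by (simp add: ln_div ln_mult field_simps)
  have "a * (2 * (b - a) / (3 * a + b)) + (a - b) / 2 = - ((a - b)^2) / (2 * (3 * a + b))"
    using a assms by (simp add: field_simps power2_eq_square)
  then show ?thesis using A B by (simp add: algebra_simps)
qed

lemma pair_entropy_gap_ge_of_le: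
  assumes "0 < b" "b \<le> a"
  shows "(a - b)^2 / (a + b) \<le> 6 * (a + b - pair_entropy a b)"
proof -
  have a: "0 < a" using assms by linarith
  define q where "q = (a - b)^2 / (2 * (3 * a + b))"
  have q: "(a - b)^2 / (a + b) \<le> 6 * q" "0 \<le> q"
    unfolding q_def using assms by (auto simp: field_simps intro!: divide_left_mono)
  have "pair_entropy a b = (- a * ln (a / (a + b)) - b * ln (b / (a + b))) / ln 2"
    using a assms by (simp add: pair_entropy_def log_def field_simps)
  also have "\<dots> \<le> ((a + b) * ln 2 - q) / ln 2"
    unfolding q_def using pair_entropy_nats_le[OF assms] by (simp add: divide_right_mono)
  also have "\<dots> = (a + b) - q / ln 2" by (simp add: field_simps)
  also have "\<dots> \<le> (a + b) - q"
    using q ln_2_less_1 by (simp add: le_divide_eq mult_left_le)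
  finally show ?thesis using q by (simp add: algebra_simps)
qed

lemma pair_entropy_gap_ge:
  assumes "0 \<le> a" "0 \<le> b"
  shows "(a - b)^2 / (a + b) \<le> 6 * (a + b - pair_entropy a b)"
proof -
  have "(a - b)^2 / (a + b) \<le> 6 * (a + b - pair_entropy a b)" if "0 \<le> b" "b \<le> a" for a b
  proof (cases "b = 0")
    case True
    then show ?thesis using that by (simp add: pair_entropy_def power2_eq_square)
  next
    case False
    then show ?thesis using that pair_entropy_gap_ge_of_le by simp
  qed
  from this[of a b] this[of b a] assms show ?thesis
    by (cases "b \<le> a") (auto simp: pair_entropy_commute add.commute power2_commute)
qed

lemma two_sqrt_mult_le:
  fixes x y e :: real assumes "0 \<le> x" "0 \<le> y" "0 < e"
  shows "2 * sqrt (x * y) \<le> e * x + y / e"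
  using arith_geo_mean_sqrt[of "e * x" "y / e"] assms by simp

lemma min_le_sqrt_mult:
  fixes x y :: real assumes "0 \<le> x" "0 \<le> y"
  shows "min x y \<le> sqrt (x * y)"
  using assms by (intro real_le_rsqrt) (auto simp: min_def power2_eq_square intro: mult_mono)

lemma two_sqrt_mult_le_eps_min:
  fixes a b e :: real assumes "0 \<le> a" "0 \<le> b" "0 < e"
  shows "2 * sqrt (a * b) \<le> e * (a + b) + min a b / e"
proof -
  have "a * b \<le> (a + b) * min a b"
    using assms by (auto simp: min_def algebra_simps)
  then have "2 * sqrt (a * b) \<le> 2 * sqrt ((a + b) * min a b)" by simp
  also have "\<dots> \<le> e * (a + b) + min a b / e"
    using assms by (intro two_sqrt_mult_le) auto
  finally show ?thesis .
qed

lemma abs_diff_le_eps: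
  fixes a b e :: real assumes "0 \<le> a" "0 \<le> b" "0 < e"
  shows "\<bar>a - b\<bar> \<le> e * (a + b) + (a - b)^2 / (a + b) / e"
proof (cases "a + b = 0")
  case False
  have "\<bar>a - b\<bar> \<le> 2 * \<bar>a - b\<bar>" by simp
  also have "\<dots> = 2 * sqrt ((a + b) * ((a - b)^2 / (a + b)))"
    using False by simp
  also have "\<dots> \<le> e * (a + b) + (a - b)^2 / (a + b) / e"
    using assms by (intro two_sqrt_mult_le) auto
  finally show ?thesis .
qed (use assms in auto)

definition zkh_bounds :: "real \<Rightarrow> real \<Rightarrow> real \<Rightarrow> bool" where
  "zkh_bounds z k h \<longleftrightarrow> 0 \<le> z \<and> z \<le> 1 \<and> 0 \<le> k \<and> k \<le> 1 \<and> 1 - k \<le> z \<and> 1 - 2 * h \<le> k \<and>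
     (\<forall>e>0. z \<le> e + h / e \<and> k \<le> e + 6 * (1 - h) / e)"

lemma zkh_bounds_sum:
  fixes a b :: "'v \<Rightarrow> real"
  assumes nonneg: "\<And>v. v \<in> V \<Longrightarrow> 0 \<le> a v" "\<And>v. v \<in> V \<Longrightarrow> 0 \<le> b v"
    and sum_eq_1: "(\<Sum>v\<in>V. a v + b v) = 1"
  shows "zkh_bounds (2 * (\<Sum>v\<in>V. sqrt (a v * b v))) (\<Sum>v\<in>V. \<bar>a v - b v\<bar>)
           (\<Sum>v\<in>V. pair_entropy (a v) (b v))"
proof -
  let ?Z = "2 * (\<Sum>v\<in>V. sqrt (a v * b v))"
  let ?K = "\<Sum>v\<in>V. \<bar>a v - b v\<bar>"
  let ?H = "\<Sum>v\<in>V. pair_entropy (a v) (b v)"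
  have Z: "?Z = (\<Sum>v\<in>V. 2 * sqrt (a v * b v))" by (simp add: sum_distrib_left)
  have one_minus_K: "1 - ?K = (\<Sum>v\<in>V. 2 * min (a v) (b v))"
    unfolding sum_eq_1[symmetric] sum_subtractf[symmetric] by (rule sum.cong) auto
  have "0 \<le> ?Z" using nonneg by (auto intro!: sum_nonneg)
  moreover have "?Z \<le> 1"
    unfolding Z sum_eq_1[symmetric] using nonneg two_sqrt_mult_le[of "a _" "b _" 1] by (intro sum_mono) simp
  moreover have "?K \<le> 1"
    unfolding sum_eq_1[symmetric] using nonneg by (intro sum_mono) (simp add: abs_le_iff)
  moreover have "1 - ?K \<le> ?Z"
    unfolding one_minus_K Z using nonneg
    by (intro sum_mono mult_left_mono min_le_sqrt_mult) auto
  moreover have "1 - 2 * ?H \<le> ?K"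
  proof -
    have "(\<Sum>v\<in>V. 2 * min (a v) (b v)) \<le> (\<Sum>v\<in>V. 2 * pair_entropy (a v) (b v))"
      using nonneg min_le_pair_entropy by (intro sum_mono) auto
    then show ?thesis using one_minus_K by (simp add: sum_distrib_left)
  qed
  moreover have "?Z \<le> e + ?H / e" if e: "0 < e" for e
  proof -
    have "?Z \<le> (\<Sum>v\<in>V. e * (a v + b v) + min (a v) (b v) / e)"
      unfolding Z using nonneg e by (intro sum_mono two_sqrt_mult_le_eps_min) auto
    also have "\<dots> = e + (\<Sum>v\<in>V. min (a v) (b v)) / e"
      using sum_eq_1 by (simp add: sum.distrib sum_distrib_left[symmetric] sum_divide_distrib[symmetric])
    also have "\<dots> \<le> e + ?H / e"
      using e nonneg min_le_pair_entropy by (auto intro!: divide_right_mono sum_mono)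
    finally show ?thesis .
  qed
  moreover have "?K \<le> e + 6 * (1 - ?H) / e" if e: "0 < e" for e
  proof -
    have "?K \<le> (\<Sum>v\<in>V. e * (a v + b v) + (a v - b v)^2 / (a v + b v) / e)"
      using nonneg e by (intro sum_mono abs_diff_le_eps) auto
    also have "\<dots> = e + (\<Sum>v\<in>V. (a v - b v)^2 / (a v + b v)) / e"
      using sum_eq_1 by (simp add: sum.distrib sum_distrib_left[symmetric] sum_divide_distrib[symmetric]
          del: divide_divide_eq_left)
    also have "(\<Sum>v\<in>V. (a v - b v)^2 / (a v + b v)) \<le> (\<Sum>v\<in>V. 6 * ((a v + b v) - pair_entropy (a v) (b v)))"
      using nonneg pair_entropy_gap_ge by (intro sum_mono) auto
    also have "\<dots> = 6 * (1 - ?H)" by (simp only: sum_distrib_left[symmetric] sum_subtractf sum_eq_1)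
    finally show ?thesis using e by (simp add: divide_right_mono)
  qed
  ultimately show ?thesis unfolding zkh_bounds_def by (auto intro: sum_nonneg)
qed

lemma tendsto_zero_if_le_eps_plus_div:
  fixes z g :: "nat \<Rightarrow> real"
  assumes z: "\<And>n. 0 \<le> z n" and le: "\<And>e n. 0 < e \<Longrightarrow> z n \<le> e + g n / e"
    and g: "g \<longlonglongrightarrow> 0"
  shows "z \<longlonglongrightarrow> 0"
proof (rule LIMSEQ_I)
  fix r :: real assume r: "0 < r"
  then have "0 < r * r / 4" by simp
  from LIMSEQ_D[OF g this] obtain N where N: "\<And>n. n \<ge> N \<Longrightarrow> \<bar>g n\<bar> < r * r / 4" by auto
  have "norm (z n - 0) < r" if "N \<le> n" for n
  proof -
    have "g n / (r / 2) < (r * r / 4) / (r / 2)"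
      using N[OF that] r by (intro divide_strict_right_mono) auto
    also have "\<dots> = r / 2" using r by (simp add: field_simps)
    finally show ?thesis using le[of "r / 2" n] z[of n] r by simp
  qed
  then show "\<exists>N. \<forall>n\<ge>N. norm (z n - 0) < r" by auto
qed

lemma zkh_bounds_tendsto:
  assumes zkh: "\<And>n. zkh_bounds (z n) (k n) (h n)" and h: "h \<longlonglongrightarrow> L" and L: "L = 0 \<or> L = 1"
  shows "z \<longlonglongrightarrow> L" "k \<longlonglongrightarrow> 1 - L"
proof -
  have "z \<longlonglongrightarrow> L \<and> k \<longlonglongrightarrow> 1 - L"
    using L
  proof
    assume L0: "L = 0"
    have "z \<longlonglongrightarrow> 0"
      using zkh h L0 by (intro tendsto_zero_if_le_eps_plus_div[of z h]) (auto simp: zkh_bounds_def)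
    moreover have "k \<longlonglongrightarrow> 1"
    proof (rule tendsto_sandwich[of "\<lambda>n. 1 - 2 * h n" k sequentially "\<lambda>n. 1"])
      show "(\<lambda>n. 1 - 2 * h n) \<longlonglongrightarrow> 1" using h L0 by (auto intro!: tendsto_eq_intros)
      show "\<forall>\<^sub>F n in sequentially. 1 - 2 * h n \<le> k n" using zkh by (simp add: zkh_bounds_def)
      show "\<forall>\<^sub>F n in sequentially. k n \<le> 1" using zkh by (simp add: zkh_bounds_def)
    qed simp
    ultimately show ?thesis using L0 by simp
  next
    assume L1: "L = 1"
    have "(\<lambda>n. 6 * (1 - h n)) \<longlonglongrightarrow> 0" using h L1 by (auto intro!: tendsto_eq_intros)
    then have "k \<longlonglongrightarrow> 0"
      using zkh by (intro tendsto_zero_if_le_eps_plus_div[of k]) (auto simp: zkh_bounds_def)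
    moreover have "z \<longlonglongrightarrow> 1"
    proof (rule tendsto_sandwich[of "\<lambda>n. 1 - k n" z sequentially "\<lambda>n. 1"])
      show "(\<lambda>n. 1 - k n) \<longlonglongrightarrow> 1" using \<open>k \<longlonglongrightarrow> 0\<close> by (auto intro!: tendsto_eq_intros)
      show "\<forall>\<^sub>F n in sequentially. 1 - k n \<le> z n" using zkh by (simp add: zkh_bounds_def)
      show "\<forall>\<^sub>F n in sequentially. z n \<le> 1" using zkh by (simp add: zkh_bounds_def)
    qed simp
    ultimately show ?thesis using L1 by simp
  qed
  then show "z \<longlonglongrightarrow> L" "k \<longlonglongrightarrow> 1 - L" by auto
qed

section \<open>Entropy of finitely many weights\<close>

(* Weights p on a finite set R stand for the law of a finite-valued random variable;
   pmass R p f is the law of f and fentropy R p f its entropy in bits. *)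
definition pmass :: "'r set \<Rightarrow> ('r \<Rightarrow> real) \<Rightarrow> ('r \<Rightarrow> 'v) \<Rightarrow> 'v \<Rightarrow> real" where
  "pmass R p f v = (\<Sum>r\<in>R. if f r = v then p r else 0)"

definition fentropy :: "'r set \<Rightarrow> ('r \<Rightarrow> real) \<Rightarrow> ('r \<Rightarrow> 'v) \<Rightarrow> real" where
  "fentropy R p f = (\<Sum>v\<in>f ` R. - pmass R p f v * log 2 (pmass R p f v))"

lemma gibbs_inequality:
  fixes a b :: "'i \<Rightarrow> real"
  assumes a_nonneg: "\<And>i. i \<in> I \<Longrightarrow> 0 \<le> a i"
    and b_pos: "\<And>i. i \<in> I \<Longrightarrow> 0 < a i \<Longrightarrow> 0 < b i"
    and sum_le: "(\<Sum>i\<in>I. if 0 < a i then b i else 0) \<le> (\<Sum>i\<in>I. a i)"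
  shows "(\<Sum>i\<in>I. a i * (log 2 (b i) - log 2 (a i))) \<le> 0"
proof -
  have ln2: "0 < ln (2::real)" by simp
  have termwise: "a i * (log 2 (b i) - log 2 (a i)) \<le> ((if 0 < a i then b i else 0) - a i) / ln 2"
    if i: "i \<in> I" for i
  proof (cases "0 < a i")
    case False
    then have "a i = 0" using a_nonneg[OF i] by simp
    then show ?thesis by simp
  next
    case True
    have b: "0 < b i" using b_pos[OF i True] .
    have "log 2 (b i) - log 2 (a i) = ln (b i / a i) / ln 2"
      using True b by (simp add: log_def ln_div diff_divide_distrib)
    also have "\<dots> \<le> (b i / a i - 1) / ln 2"
      using True b ln2 by (intro divide_right_mono ln_le_minus_one) auto
    finally have "a i * (log 2 (b i) - log 2 (a i)) \<le> a i * ((b i / a i - 1) / ln 2)"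
      using True by (intro mult_left_mono) auto
    also have "\<dots> = (b i - a i) / ln 2" using True by (simp add: field_simps)
    finally show ?thesis using True by simp
  qed
  have "(\<Sum>i\<in>I. a i * (log 2 (b i) - log 2 (a i))) \<le> (\<Sum>i\<in>I. ((if 0 < a i then b i else 0) - a i) / ln 2)"
    using termwise by (rule sum_mono)
  also have "\<dots> = ((\<Sum>i\<in>I. if 0 < a i then b i else 0) - (\<Sum>i\<in>I. a i)) / ln 2"
    by (simp add: sum_divide_distrib[symmetric] sum_subtractf)
  also have "\<dots> \<le> 0" using sum_le ln2 by (simp add: divide_nonpos_pos)
  finally show ?thesis .
qed

locale finite_weights =
  fixes R :: "'r set" and p :: "'r \<Rightarrow> real"
  assumes finite_R: "finite R" and nonneg: "\<And>r. r \<in> R \<Longrightarrow> 0 \<le> p r" and sum_eq_1: "sum p R = 1"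
begin

lemma pmass_nonneg: "0 \<le> pmass R p f v"
  unfolding pmass_def using nonneg by (auto intro!: sum_nonneg)

lemma pmass_notin_image: "v \<notin> f ` R \<Longrightarrow> pmass R p f v = 0"
  unfolding pmass_def by (auto intro!: sum.neutral)

lemma pmass_comp:
  assumes "finite V" "f ` R \<subseteq> V"
  shows "pmass R p (\<lambda>r. g (f r)) w = (\<Sum>v\<in>V. if g v = w then pmass R p f v else 0)"
proof -
  have "(\<Sum>v\<in>V. if g v = w then pmass R p f v else 0)
      = (\<Sum>v\<in>V. \<Sum>r\<in>R. if v = f r then (if g (f r) = w then p r else 0) else 0)"
  proof (intro sum.cong refl)
    fix v assume "v \<in> V"
    show "(if g v = w then pmass R p f v else 0) = (\<Sum>r\<in>R. if v = f r then (if g (f r) = w then p r else 0) else 0)"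
      unfolding pmass_def by (cases "g v = w") (auto intro: sum.cong sum.neutral)
  qed
  also have "\<dots> = (\<Sum>r\<in>R. \<Sum>v\<in>V. if v = f r then (if g (f r) = w then p r else 0) else 0)"
    by (rule sum.swap)
  also have "\<dots> = (\<Sum>r\<in>R. if g (f r) = w then p r else 0)"
    using assms by (intro sum.cong refl) (auto simp: sum.delta')
  finally show ?thesis unfolding pmass_def by simp
qed

lemma pmass_le_pmass_comp: "pmass R p f v \<le> pmass R p (\<lambda>r. g (f r)) (g v)"
  unfolding pmass_def using nonneg by (intro sum_mono) auto

lemma sum_pmass_pair_eq_marginal:
  assumes "finite B" "t ` R \<subseteq> B"
  shows "(\<Sum>z\<in>B. pmass R p (\<lambda>r. (q r, t r)) (y, z)) = pmass R p q y"
proof -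
  have "(\<Sum>z\<in>B. pmass R p (\<lambda>r. (q r, t r)) (y, z))
      = (\<Sum>z\<in>B. \<Sum>r\<in>R. if z = t r then (if q r = y then p r else 0) else 0)"
    unfolding pmass_def by (intro sum.cong refl) auto
  also have "\<dots> = (\<Sum>r\<in>R. \<Sum>z\<in>B. if z = t r then (if q r = y then p r else 0) else 0)"
    by (rule sum.swap)
  also have "\<dots> = pmass R p q y"
    unfolding pmass_def using assms by (intro sum.cong refl) (auto simp: sum.delta')
  finally show ?thesis .
qed

lemma sum_pmass:
  assumes "finite V" "f ` R \<subseteq> V"
  shows "(\<Sum>v\<in>V. pmass R p f v) = 1"
proof -
  have "(\<Sum>v\<in>V. pmass R p f v) = (\<Sum>v\<in>V. \<Sum>r\<in>R. if v = f r then p r else 0)"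
    unfolding pmass_def by (intro sum.cong refl) auto
  also have "\<dots> = (\<Sum>r\<in>R. \<Sum>v\<in>V. if v = f r then p r else 0)" by (rule sum.swap)
  also have "\<dots> = (\<Sum>r\<in>R. p r)" using assms by (intro sum.cong refl) (auto simp: sum.delta')
  finally show ?thesis using sum_eq_1 by simp
qed

lemma fentropy_eq_sum:
  assumes "finite V" "f ` R \<subseteq> V"
  shows "fentropy R p f = (\<Sum>v\<in>V. - pmass R p f v * log 2 (pmass R p f v))"
  unfolding fentropy_def using assms by (intro sum.mono_neutral_left) (auto simp: pmass_notin_image)

lemma fentropy_comp_eq_sum:
  assumes V: "finite V" "f ` R \<subseteq> V"
  shows "fentropy R p (\<lambda>r. g (f r)) = (\<Sum>v\<in>V. - pmass R p f v * log 2 (pmass R p (\<lambda>r. g (f r)) (g v)))"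
proof -
  let ?G = "\<lambda>r. g (f r)"
  have "(\<Sum>v\<in>V. - pmass R p f v * log 2 (pmass R p ?G (g v)))
      = (\<Sum>w\<in>g ` V. \<Sum>v\<in>{v\<in>V. g v = w}. - pmass R p f v * log 2 (pmass R p ?G (g v)))"
    by (rule sum.image_gen[OF V(1), of _ g])
  also have "\<dots> = (\<Sum>w\<in>g ` V. - (\<Sum>v\<in>{v\<in>V. g v = w}. pmass R p f v) * log 2 (pmass R p ?G w))"
    by (intro sum.cong refl) (simp add: sum_distrib_right sum_negf)
  also have "\<dots> = (\<Sum>w\<in>g ` V. - pmass R p ?G w * log 2 (pmass R p ?G w))"
    using V by (intro sum.cong refl) (simp add: sum.inter_filter pmass_comp[OF V])
  also have "\<dots> = fentropy R p ?G"
    using V by (intro fentropy_eq_sum[symmetric]) auto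
  finally show ?thesis by simp
qed

lemma fentropy_comp_inj:
  assumes "inj_on g (f ` R)"
  shows "fentropy R p (\<lambda>r. g (f r)) = fentropy R p f"
proof -
  have e: "pmass R p (\<lambda>r. g (f r)) (g v) = pmass R p f v" if "v \<in> f ` R" for v
    unfolding pmass_def using assms that by (intro sum.cong refl) (auto simp: inj_on_def)
  have "fentropy R p (\<lambda>r. g (f r)) = (\<Sum>v\<in>f ` R. - pmass R p f v * log 2 (pmass R p (\<lambda>r. g (f r)) (g v)))"
    using finite_R by (intro fentropy_comp_eq_sum) auto
  also have "\<dots> = fentropy R p f" unfolding fentropy_def by (intro sum.cong refl) (simp add: e)
  finally show ?thesis .
qed

lemma R_nonempty: "R \<noteq> {}" using sum_eq_1 by auto

lemma fentropy_comp_le: "fentropy R p (\<lambda>r. g (f r)) \<le> fentropy R p f"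
proof -
  have "fentropy R p (\<lambda>r. g (f r)) = (\<Sum>v\<in>f ` R. - pmass R p f v * log 2 (pmass R p (\<lambda>r. g (f r)) (g v)))"
    using finite_R by (intro fentropy_comp_eq_sum) auto
  also have "\<dots> \<le> (\<Sum>v\<in>f ` R. - pmass R p f v * log 2 (pmass R p f v))"
  proof (intro sum_mono)
    fix v
    show "- pmass R p f v * log 2 (pmass R p (\<lambda>r. g (f r)) (g v)) \<le> - pmass R p f v * log 2 (pmass R p f v)"
    proof (cases "pmass R p f v = 0")
      case False
      then have "0 < pmass R p f v" using pmass_nonneg[of f v] by simp
      moreover have "pmass R p f v \<le> pmass R p (\<lambda>r. g (f r)) (g v)" by (rule pmass_le_pmass_comp)
      ultimately show ?thesis by (simp add: mult_left_mono)
    qed simp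
  qed
  finally show ?thesis unfolding fentropy_def .
qed

lemma fentropy_pair_le:
  fixes q :: "'r \<Rightarrow> 'a" and t :: "'r \<Rightarrow> 'b"
  shows "fentropy R p (\<lambda>r. (q r, t r)) \<le> fentropy R p q + log 2 (card (t ` R))"
proof -
  let ?f = "\<lambda>r. (q r, t r)"
  define V where "V = q ` R \<times> t ` R"
  define k where "k = real (card (t ` R))"
  define b where "b v = pmass R p q (fst v) / k" for v :: "'a \<times> 'b"
  have V: "finite V" "?f ` R \<subseteq> V" unfolding V_def using finite_R by auto
  have k: "0 < k" unfolding k_def using finite_R R_nonempty by (simp add: card_gt_0_iff)
  have le: "pmass R p ?f v \<le> pmass R p q (fst v)" for v
    using pmass_le_pmass_comp[of ?f v fst] by simp
  have split: "- pmass R p ?f v * log 2 (pmass R p ?f v)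
      = - pmass R p ?f v * log 2 (pmass R p q (fst v)) + pmass R p ?f v * log 2 k
        + pmass R p ?f v * (log 2 (b v) - log 2 (pmass R p ?f v))" for v
  proof (cases "pmass R p ?f v = 0")
    case False
    then have "0 < pmass R p ?f v" using pmass_nonneg[of ?f v] by simp
    then have "0 < pmass R p q (fst v)" using le[of v] by simp
    then have log_b: "log 2 (b v) = log 2 (pmass R p q (fst v)) - log 2 k"
      unfolding b_def using k by (simp add: log_divide)
    show ?thesis unfolding log_b by (simp add: algebra_simps)
  qed simp
  have gibbs: "(\<Sum>v\<in>V. pmass R p ?f v * (log 2 (b v) - log 2 (pmass R p ?f v))) \<le> 0"
  proof (rule gibbs_inequality)
    show "0 \<le> pmass R p ?f v" for v by (rule pmass_nonneg)
    show "0 < b v" if "v \<in> V" "0 < pmass R p ?f v" for v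
      using that le[of v] k unfolding b_def by simp
    have "(\<Sum>v\<in>V. if 0 < pmass R p ?f v then b v else 0) \<le> (\<Sum>v\<in>V. b v)"
      using k unfolding b_def by (intro sum_mono) (auto intro!: divide_nonneg_pos pmass_nonneg)
    also have "\<dots> = (\<Sum>x\<in>q ` R. \<Sum>y\<in>t ` R. pmass R p q x / k)"
      unfolding V_def b_def by (simp add: sum.cartesian_product')
    also have "\<dots> = (\<Sum>x\<in>q ` R. pmass R p q x)"
      using k unfolding k_def by simp
    also have "\<dots> = (\<Sum>v\<in>V. pmass R p ?f v)"
      using finite_R V by (simp add: sum_pmass)
    finally show "(\<Sum>v\<in>V. if 0 < pmass R p ?f v then b v else 0) \<le> (\<Sum>v\<in>V. pmass R p ?f v)" .
  qed
  have "fentropy R p ?f = fentropy R p q + (\<Sum>v\<in>V. pmass R p ?f v) * log 2 k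
      + (\<Sum>v\<in>V. pmass R p ?f v * (log 2 (b v) - log 2 (pmass R p ?f v)))"
    unfolding fentropy_eq_sum[OF V] fentropy_comp_eq_sum[OF V, of fst, simplified] split
    by (simp add: sum.distrib sum_distrib_right sum_subtractf sum_negf)
  then show ?thesis using gibbs sum_pmass[OF V] unfolding k_def by simp
qed

lemma sum_pmass_chain_le:
  fixes u :: "'r \<Rightarrow> 'x" and q :: "'r \<Rightarrow> 'a" and t :: "'r \<Rightarrow> 'b"
  shows "(\<Sum>(x, y, z)\<in>u ` R \<times> q ` R \<times> t ` R.
      pmass R p (\<lambda>r. (u r, q r)) (x, y) * pmass R p (\<lambda>r. (q r, t r)) (y, z) / pmass R p q y) \<le> 1"
proof -
  let ?uq = "pmass R p (\<lambda>r. (u r, q r))" and ?qt = "pmass R p (\<lambda>r. (q r, t r))"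
  have "(\<Sum>(x, y, z)\<in>u ` R \<times> q ` R \<times> t ` R. ?uq (x, y) * ?qt (y, z) / pmass R p q y)
      = (\<Sum>x\<in>u ` R. \<Sum>y\<in>q ` R. ?uq (x, y) / pmass R p q y * (\<Sum>z\<in>t ` R. ?qt (y, z)))"
    by (simp add: sum.cartesian_product[symmetric] sum_distrib_left)
  also have "\<dots> = (\<Sum>x\<in>u ` R. \<Sum>y\<in>q ` R. ?uq (x, y) / pmass R p q y * pmass R p q y)"
    using finite_R by (simp add: sum_pmass_pair_eq_marginal)
  also have "\<dots> \<le> (\<Sum>x\<in>u ` R. \<Sum>y\<in>q ` R. ?uq (x, y))"
    by (intro sum_mono) (simp add: pmass_nonneg)
  also have "\<dots> = (\<Sum>v\<in>u ` R \<times> q ` R. ?uq v)"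
    by (simp add: sum.cartesian_product)
  also have "\<dots> = 1"
    using finite_R by (intro sum_pmass) auto
  finally show ?thesis .
qed

lemma fentropy_conditioning_reduces:
  fixes u :: "'r \<Rightarrow> 'x" and q :: "'r \<Rightarrow> 'a" and t :: "'r \<Rightarrow> 'b"
  shows "fentropy R p (\<lambda>r. (u r, (q r, t r))) - fentropy R p (\<lambda>r. (q r, t r))
         \<le> fentropy R p (\<lambda>r. (u r, q r)) - fentropy R p q"
proof -
  let ?f = "\<lambda>r. (u r, (q r, t r))"
  define V where "V = u ` R \<times> q ` R \<times> t ` R"
  have V: "finite V" "?f ` R \<subseteq> V" unfolding V_def using finite_R by auto
  define a where "a v = pmass R p ?f v" for v
  define P1 where "P1 v = pmass R p (\<lambda>r. (u r, q r)) (fst v, fst (snd v))" for v :: "'x \<times> 'a \<times> 'b"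
  define P2 where "P2 v = pmass R p (\<lambda>r. (q r, t r)) (snd v)" for v :: "'x \<times> 'a \<times> 'b"
  define P3 where "P3 v = pmass R p q (fst (snd v))" for v :: "'x \<times> 'a \<times> 'b"
  define b where "b v = P1 v * P2 v / P3 v" for v
  have E0: "fentropy R p ?f = (\<Sum>v\<in>V. - a v * log 2 (a v))" unfolding a_def by (rule fentropy_eq_sum[OF V])
  have E1: "fentropy R p (\<lambda>r. (u r, q r)) = (\<Sum>v\<in>V. - a v * log 2 (P1 v))"
    using fentropy_comp_eq_sum[OF V, of "\<lambda>v. (fst v, fst (snd v))"] unfolding a_def P1_def by simp
  have E2: "fentropy R p (\<lambda>r. (q r, t r)) = (\<Sum>v\<in>V. - a v * log 2 (P2 v))"
    using fentropy_comp_eq_sum[OF V, of snd] unfolding a_def P2_def by simp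
  have E3: "fentropy R p q = (\<Sum>v\<in>V. - a v * log 2 (P3 v))"
    using fentropy_comp_eq_sum[OF V, of "\<lambda>v. fst (snd v)"] unfolding a_def P3_def by simp
  have a0: "0 \<le> a v" for v unfolding a_def by (rule pmass_nonneg)
  have P: "a v \<le> P1 v" "a v \<le> P2 v" "a v \<le> P3 v" for v
    unfolding a_def P1_def P2_def P3_def
    using pmass_le_pmass_comp[of ?f v "\<lambda>v. (fst v, fst (snd v))"] pmass_le_pmass_comp[of ?f v snd]
      pmass_le_pmass_comp[of ?f v "\<lambda>v. fst (snd v)"] by simp_all
  have log_b: "- a v * log 2 (a v) - (- a v * log 2 (P2 v)) - ((- a v * log 2 (P1 v)) - (- a v * log 2 (P3 v)))
      = a v * (log 2 (b v) - log 2 (a v))" for v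
  proof (cases "a v = 0")
    case False
    then have "0 < a v" using a0[of v] by simp
    then have "0 < P1 v" "0 < P2 v" "0 < P3 v" using P[of v] by auto
    then have log_b: "log 2 (b v) = log 2 (P1 v) + log 2 (P2 v) - log 2 (P3 v)"
      unfolding b_def by (simp add: log_mult log_divide)
    show ?thesis unfolding log_b by (simp add: algebra_simps)
  qed simp
  have "(\<Sum>v\<in>V. a v * (log 2 (b v) - log 2 (a v))) \<le> 0"
  proof (rule gibbs_inequality)
    show "0 \<le> a v" for v by (rule a0)
    show "0 < b v" if "v \<in> V" "0 < a v" for v
      using that P[of v] unfolding b_def by simp
    have "(\<Sum>v\<in>V. if 0 < a v then b v else 0) \<le> (\<Sum>v\<in>V. b v)"
      unfolding b_def P1_def P2_def P3_def by (intro sum_mono) (simp add: pmass_nonneg)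
    also have "\<dots> \<le> 1"
      using sum_pmass_chain_le[of u q t] unfolding V_def b_def P1_def P2_def P3_def
      by (simp add: case_prod_beta)
    also have "\<dots> = (\<Sum>v\<in>V. a v)" unfolding a_def using V by (intro sum_pmass[symmetric])
    finally show "(\<Sum>v\<in>V. if 0 < a v then b v else 0) \<le> (\<Sum>v\<in>V. a v)" .
  qed
  moreover have "(fentropy R p ?f - fentropy R p (\<lambda>r. (q r, t r))) - (fentropy R p (\<lambda>r. (u r, q r)) - fentropy R p q)
      = (\<Sum>v\<in>V. a v * (log 2 (b v) - log 2 (a v)))"
    unfolding E0 E1 E2 E3 log_b[symmetric] by (simp add: sum_subtractf sum_negf)
  ultimately show ?thesis by simp
qed

lemma pmass_False_plus_True:
  "pmass R p (\<lambda>r. (u r, q r)) (False, v) + pmass R p (\<lambda>r. (u r, q r)) (True, v) = pmass R p q v"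
  unfolding pmass_def sum.distrib[symmetric] by (intro sum.cong refl) auto

lemma cond_entropy_eq_fentropy_diff:
  fixes u :: "'r \<Rightarrow> bool" and q :: "'r \<Rightarrow> 'a"
  shows "(\<Sum>v\<in>q ` R. \<Sum>x\<in>UNIV. if pmass R p (\<lambda>r. (u r, q r)) (x, v) = 0 then 0
            else - pmass R p (\<lambda>r. (u r, q r)) (x, v) * log 2 (pmass R p (\<lambda>r. (u r, q r)) (x, v) / pmass R p q v))
         = fentropy R p (\<lambda>r. (u r, q r)) - fentropy R p q"
proof -
  let ?J = "pmass R p (\<lambda>r. (u r, q r))"
  define V where "V = (UNIV :: bool set) \<times> q ` R"
  have V: "finite V" "(\<lambda>r. (u r, q r)) ` R \<subseteq> V" unfolding V_def using finite_R by auto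
  have le: "?J (x, v) \<le> pmass R p q v" for x v
    using pmass_le_pmass_comp[of "\<lambda>r. (u r, q r)" "(x, v)" snd] by simp
  have termwise: "(if ?J (x, v) = 0 then 0 else - ?J (x, v) * log 2 (?J (x, v) / pmass R p q v))
      = - ?J (x, v) * log 2 (?J (x, v)) - (- ?J (x, v) * log 2 (pmass R p q v))" for x v
  proof (cases "?J (x, v) = 0")
    case False
    then have pos: "0 < ?J (x, v)" using pmass_nonneg[of "\<lambda>r. (u r, q r)" "(x, v)"] by simp
    then have "0 < pmass R p q v" using le[of x v] by simp
    then show ?thesis using pos False by (simp add: log_divide algebra_simps)
  qed simp
  have E1: "fentropy R p (\<lambda>r. (u r, q r)) = (\<Sum>v\<in>V. - ?J v * log 2 (?J v))" by (rule fentropy_eq_sum[OF V])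
  have E2: "fentropy R p q = (\<Sum>v\<in>V. - ?J v * log 2 (pmass R p q (snd v)))"
    using fentropy_comp_eq_sum[OF V, of snd] by simp
  have sw: "(\<Sum>v\<in>q ` R. \<Sum>x\<in>UNIV. F x v) = (\<Sum>w\<in>V. F (fst w) (snd w))" for F :: "bool \<Rightarrow> 'a \<Rightarrow> real"
    unfolding V_def by (subst sum.swap) (simp add: sum.cartesian_product case_prod_beta)
  show ?thesis
    unfolding termwise sw E1 E2 by (simp add: sum_subtractf sum_negf)
qed

end

section \<open>The uniformly random index\<close>

lemma idx_Suc: "idx (Suc n) b = 2 * idx n b + (if b n then 1 else 0)"
proof -
  have "idx (Suc n) b = (\<Sum>j<Suc n. if b j then 2 ^ (n - j) else 0)"
    unfolding idx_def by (intro sum.cong refl) auto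
  also have "\<dots> = (\<Sum>j<n. if b j then 2 ^ (n - j) else 0) + (if b n then 1 else 0)"
    by simp
  also have "(\<Sum>j<n. if b j then 2 ^ (n - j) else 0) = (\<Sum>j<n. 2 * (if b j then 2 ^ (n - 1 - j) else 0::nat))"
  proof (intro sum.cong refl)
    fix j assume "j \<in> {..<n}"
    then have "n - j = Suc (n - 1 - j)" by auto
    then show "(if b j then 2 ^ (n - j) else 0) = 2 * (if b j then 2 ^ (n - 1 - j) else 0::nat)" by simp
  qed
  also have "\<dots> = 2 * idx n b" unfolding idx_def by (simp add: sum_distrib_left)
  finally show ?thesis by simp
qed

lemma idx_less: "idx n b < 2 ^ n"
  by (induction n) (auto simp: idx_Suc idx_def[of 0])

lemma idx_eq_iff_bits: "c < 2 ^ n \<Longrightarrow> (idx n b = c) \<longleftrightarrow> (\<forall>j<n. b j = bit c (n - 1 - j))"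
proof (induction n arbitrary: c)
  case 0 then show ?case by (simp add: idx_def)
next
  case (Suc n)
  have lt: "c div 2 < 2 ^ n" using Suc.prems by simp
  have "idx (Suc n) b = c \<longleftrightarrow> idx n b = c div 2 \<and> b n = odd c"
    unfolding idx_Suc by (cases "b n") (simp_all, presburger+)
  also have "\<dots> \<longleftrightarrow> (\<forall>j<n. b j = bit (c div 2) (n - 1 - j)) \<and> b n = odd c"
    using Suc.IH[OF lt] by simp
  also have "\<dots> \<longleftrightarrow> (\<forall>j<Suc n. b j = bit c (Suc n - 1 - j))"
  proof -
    have "bit (c div 2) (n - 1 - j) = bit c (Suc n - 1 - j)" if "j < n" for j
    proof -
      have "Suc n - 1 - j = Suc (n - 1 - j)" using that by auto
      then show ?thesis by (simp add: bit_Suc)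
    qed
    moreover have "bit c (Suc n - 1 - n) = odd c" by (simp add: bit_0)
    ultimately show ?thesis by (auto simp: less_Suc_eq)
  qed
  finally show ?case .
qed

lemma product_prob_space_coin: "product_prob_space (\<lambda>_::nat. measure_pmf (bernoulli_pmf (1/2)))"
  by (rule product_prob_spaceI) (rule prob_space_measure_pmf)

lemma idx_eq_set:
  assumes "c < 2 ^ n"
  shows "{b \<in> space coin. idx n b = c} = {b \<in> space coin. \<forall>j\<in>{..<n}. b j \<in> {bit c (n - 1 - j)}}"
  using idx_eq_iff_bits[OF assms] by auto

lemma sets_idx_eq: "{b \<in> space coin. idx n b = c} \<in> sets coin"
proof (cases "c < 2 ^ n")
  case True
  have "{b \<in> space coin. \<forall>j\<in>{..<n}. b j \<in> {bit c (n - 1 - j)}} \<in> sets coin"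
    unfolding coin_def
    by (intro sets.sets_Collect_finite_All) (auto intro!: measurable_sets[OF measurable_component_singleton])
  then show ?thesis using idx_eq_set[OF True] by simp
next
  case False
  then have "{b \<in> space coin. idx n b = c} = {}" using idx_less[of n] by (auto simp: not_less dest: leD)
  then show ?thesis by (metis sets.empty_sets)
qed

lemma idx_measurable: "idx n \<in> measurable coin (count_space UNIV)"
proof -
  have "idx n -` {c} \<inter> space coin \<in> sets coin" for c
  proof -
    have "idx n -` {c} \<inter> space coin = {b \<in> space coin. idx n b = c}" by auto
    then show ?thesis using sets_idx_eq by simp
  qed
  then show ?thesis by (subst measurable_count_space_eq2_countable) auto
qed

lemma emeasure_idx_eq: "c < 2 ^ n \<Longrightarrow> emeasure coin {b \<in> space coin. idx n b = c} = ennreal (1 / 2 ^ n)"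
proof -
  assume c: "c < 2 ^ n"
  interpret pps: product_prob_space "\<lambda>_::nat. measure_pmf (bernoulli_pmf (1/2))" UNIV by (rule product_prob_space_coin)
  have "emeasure coin {b \<in> space coin. idx n b = c}
      = emeasure coin {b \<in> space coin. \<forall>j\<in>{..<n}. b j \<in> {bit c (n - 1 - j)}}"
    using idx_eq_set[OF c] by simp
  also have "\<dots> = (\<Prod>j\<in>{..<n}. emeasure (measure_pmf (bernoulli_pmf (1/2))) {bit c (n - 1 - j)})"
    unfolding coin_def by (rule pps.emeasure_PiM_Collect) auto
  also have "\<dots> = (\<Prod>j\<in>{..<n}. ennreal (1/2))"
    by (intro prod.cong refl) (simp add: emeasure_pmf_single)
  also have "\<dots> = ennreal (1/2) ^ n" by simp
  also have "\<dots> = ennreal ((1/2) ^ n)" by (subst ennreal_power) auto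
  also have "\<dots> = ennreal (1 / 2 ^ n)" by (simp add: power_one_over)
  finally show ?thesis .
qed

lemma nn_integral_idx:
  fixes d :: "nat \<Rightarrow> real"
  assumes d: "\<And>c. 0 \<le> d c"
  shows "(\<integral>\<^sup>+ b. ennreal (d (idx n b)) \<partial>coin) = ennreal ((\<Sum>c<2^n. d c) / 2 ^ n)"
proof -
  have "(\<integral>\<^sup>+ b. ennreal (d (idx n b)) \<partial>coin)
      = (\<integral>\<^sup>+ b. (\<Sum>c<2^n. ennreal (d c) * indicator {b \<in> space coin. idx n b = c} b) \<partial>coin)"
  proof (intro nn_integral_cong)
    fix b assume "b \<in> space coin"
    have "(\<Sum>c<2^n. ennreal (d c) * indicator {b \<in> space coin. idx n b = c} b)
        = (\<Sum>c<2^n. if c = idx n b then ennreal (d c) else 0)"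
      using \<open>b \<in> space coin\<close> by (intro sum.cong refl) (auto simp: indicator_def)
    also have "\<dots> = ennreal (d (idx n b))" using idx_less[of n b] by (simp add: sum.delta)
    finally show "ennreal (d (idx n b)) = (\<Sum>c<2^n. ennreal (d c) * indicator {b \<in> space coin. idx n b = c} b)" by simp
  qed
  also have "\<dots> = (\<Sum>c<2^n. \<integral>\<^sup>+ b. ennreal (d c) * indicator {b \<in> space coin. idx n b = c} b \<partial>coin)"
    by (intro nn_integral_sum) (auto intro!: borel_measurable_indicator sets_idx_eq borel_measurable_times_ennreal)
  also have "\<dots> = (\<Sum>c<2^n. ennreal (d c) * ennreal (1 / 2 ^ n))"
    by (intro sum.cong refl) (simp add: nn_integral_cmult_indicator sets_idx_eq emeasure_idx_eq)
  also have "\<dots> = ennreal ((\<Sum>c<2^n. d c) / 2 ^ n)"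
    using d by (simp add: ennreal_mult[symmetric] sum_ennreal sum_divide_distrib)
  finally show ?thesis .
qed

(* Borel-Cantelli: the integral of d n (idx n b) is 2^-n times the sum over c, hence summable. *)
lemma AE_coin_tendsto_zero:
  fixes d :: "nat \<Rightarrow> nat \<Rightarrow> real" and L :: real
  assumes d_nonneg: "\<And>n c. 0 \<le> d n c" and d_sum: "\<And>n. (\<Sum>c<2^n. d n c) \<le> L"
  shows "AE b in coin. (\<lambda>n. d n (idx n b)) \<longlonglongrightarrow> 0"
proof -
  have "d 0 0 \<le> L" using d_sum[of 0] by simp
  then have L: "0 \<le> L" using d_nonneg[of 0 0] by linarith
  have meas: "(\<lambda>b. ennreal (d n (idx n b))) \<in> borel_measurable coin" for n
    using measurable_compose[OF idx_measurable, of "\<lambda>c. ennreal (d n c)" borel n] by simp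
  have "(\<integral>\<^sup>+ b. (\<Sum>n. ennreal (d n (idx n b))) \<partial>coin) = (\<Sum>n. \<integral>\<^sup>+ b. ennreal (d n (idx n b)) \<partial>coin)"
    using meas by (rule nn_integral_suminf)
  also have "\<dots> = (\<Sum>n. ennreal ((\<Sum>c<2^n. d n c) / 2 ^ n))"
    using d_nonneg by (simp add: nn_integral_idx)
  also have "\<dots> \<le> (\<Sum>n. ennreal (L * (1/2) ^ n))"
    using d_sum by (intro suminf_le summableI ennreal_leI) (simp add: divide_right_mono power_one_over)
  also have "\<dots> = ennreal (\<Sum>n. L * (1/2) ^ n)"
    using L by (intro suminf_ennreal2) (auto intro!: summable_mult summable_geometric)
  also have "\<dots> < top" by simp
  finally have finite_integral: "(\<integral>\<^sup>+ b. (\<Sum>n. ennreal (d n (idx n b))) \<partial>coin) \<noteq> \<infinity>"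
    by simp
  have "AE b in coin. (\<Sum>n. ennreal (d n (idx n b))) \<noteq> \<infinity>"
    using meas by (intro nn_integral_PInf_AE[OF _ finite_integral]) (simp add: borel_measurable_suminf)
  then show ?thesis
  proof (rule AE_mp, intro AE_I2 impI)
    fix b assume "(\<Sum>n. ennreal (d n (idx n b))) \<noteq> \<infinity>"
    then have "summable (\<lambda>n. d n (idx n b))" using d_nonneg by (intro summable_suminf_not_top) auto
    then show "(\<lambda>n. d n (idx n b)) \<longlonglongrightarrow> 0" by (rule summable_LIMSEQ_zero)
  qed
qed

section \<open>Conditional quantities of finite-valued random variables\<close>

definition point_prob :: "'w measure \<Rightarrow> ('w \<Rightarrow> 'r) \<Rightarrow> 'r \<Rightarrow> real" where
  "point_prob M W r = Pev M (\<lambda>w. W w = r)"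

lemma Pev_cong: "(\<And>w. w \<in> space M \<Longrightarrow> P w = P' w) \<Longrightarrow> Pev M P = Pev M P'"
  unfolding Pev_def by (rule arg_cong[where f="measure M"]) auto

lemma Pev_eq_sum_point_prob:
  assumes "prob_space M" "simple_function M W"
  shows "Pev M (\<lambda>w. P (W w)) = (\<Sum>r\<in>W ` space M. if P r then point_prob M W r else 0)"
proof -
  interpret prob_space M by fact
  let ?A = "\<lambda>r. {w \<in> space M. W w = r}"
  have sets: "?A r \<in> sets M" for r
  proof -
    have "?A r = W -` {r} \<inter> space M" by auto
    then show ?thesis using simple_functionD(2)[OF assms(2)] by simp
  qed
  have "Pev M (\<lambda>w. P (W w)) = measure M (\<Union>r\<in>{r\<in>W ` space M. P r}. ?A r)"
    unfolding Pev_def by (rule arg_cong[where f="measure M"]) auto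
  also have "\<dots> = (\<Sum>r\<in>{r\<in>W ` space M. P r}. measure M (?A r))"
    using simple_functionD(1)[OF assms(2)] sets
    by (intro finite_measure_finite_Union) (auto simp: disjoint_family_on_def)
  also have "\<dots> = (\<Sum>r\<in>W ` space M. if P r then point_prob M W r else 0)"
    using simple_functionD(1)[OF assms(2)] unfolding point_prob_def Pev_def by (simp add: sum.inter_filter)
  finally show ?thesis .
qed

lemma finite_weights_point_prob:
  assumes "prob_space M" "simple_function M W"
  shows "finite_weights (W ` space M) (point_prob M W)"
proof
  show "finite (W ` space M)" using simple_functionD(1)[OF assms(2)] .
  show "0 \<le> point_prob M W r" for r unfolding point_prob_def Pev_def by simp
  have "Pev M (\<lambda>w. True) = 1"
    using assms(1) unfolding Pev_def by (simp add: prob_space.prob_space)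
  then show "sum (point_prob M W) (W ` space M) = 1"
    using Pev_eq_sum_point_prob[OF assms, of "\<lambda>_. True"] by simp
qed

context
  fixes M :: "'w measure" and W :: "'w \<Rightarrow> 'r" and U :: "'w \<Rightarrow> bool" and Q :: "'w \<Rightarrow> 'q"
    and u :: "'r \<Rightarrow> bool" and q :: "'r \<Rightarrow> 'q"
  assumes M: "prob_space M" and W: "simple_function M W"
    and U: "\<And>w. w \<in> space M \<Longrightarrow> U w = u (W w)" and Q: "\<And>w. w \<in> space M \<Longrightarrow> Q w = q (W w)"
begin

interpretation finite_weights "W ` space M" "point_prob M W"
  using M W by (rule finite_weights_point_prob)

lemma image_eq_image_factor: "Q ` space M = q ` W ` space M"
  using Q by (auto simp: image_iff)

lemma Pev_eq_pmass: "Pev M (\<lambda>w. Q w = v) = pmass (W ` space M) (point_prob M W) q v"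
proof -
  have "Pev M (\<lambda>w. Q w = v) = Pev M (\<lambda>w. q (W w) = v)" using Q by (intro Pev_cong) auto
  then show ?thesis unfolding pmass_def using Pev_eq_sum_point_prob[OF M W] by simp
qed

lemma jp_eq_pmass: "jp M U Q x v = pmass (W ` space M) (point_prob M W) (\<lambda>r. (u r, q r)) (x, v)"
proof -
  have "jp M U Q x v = Pev M (\<lambda>w. (u (W w), q (W w)) = (x, v))"
    unfolding jp_def using U Q by (intro Pev_cong) auto
  then show ?thesis unfolding pmass_def using Pev_eq_sum_point_prob[OF M W] by simp
qed

lemma Hc_eq_fentropy_diff:
  "Hc M U Q = fentropy (W ` space M) (point_prob M W) (\<lambda>r. (u r, q r))
              - fentropy (W ` space M) (point_prob M W) q"
  unfolding Hc_def image_eq_image_factor jp_eq_pmass Pev_eq_pmass by (rule cond_entropy_eq_fentropy_diff)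

lemma zkh_bounds_Zc_Kc_Hc: "zkh_bounds (Zc M U Q) (Kc M U Q) (Hc M U Q)"
proof -
  let ?R = "W ` space M"
  define a where "a v = pmass ?R (point_prob M W) (\<lambda>r. (u r, q r)) (False, v)" for v
  define b where "b v = pmass ?R (point_prob M W) (\<lambda>r. (u r, q r)) (True, v)" for v
  have ab: "pmass ?R (point_prob M W) q v = a v + b v" for v
    unfolding a_def b_def by (rule pmass_False_plus_True[symmetric])
  have "Hc M U Q = (\<Sum>v\<in>q ` ?R. pair_entropy (a v) (b v))"
    unfolding Hc_def image_eq_image_factor jp_eq_pmass Pev_eq_pmass
    by (intro sum.cong refl) (simp add: UNIV_bool pair_entropy_def ab a_def[symmetric] b_def[symmetric])
  moreover have "Zc M U Q = 2 * (\<Sum>v\<in>q ` ?R. sqrt (a v * b v))"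
    unfolding Zc_def image_eq_image_factor jp_eq_pmass a_def b_def ..
  moreover have "Kc M U Q = (\<Sum>v\<in>q ` ?R. \<bar>a v - b v\<bar>)"
    unfolding Kc_def image_eq_image_factor jp_eq_pmass a_def b_def ..
  moreover have "(\<Sum>v\<in>q ` ?R. a v + b v) = 1"
    unfolding ab[symmetric] using finite_R by (intro sum_pmass) auto
  ultimately show ?thesis
    by (simp only:) (intro zkh_bounds_sum, auto simp: a_def b_def pmass_nonneg)
qed

end

section \<open>The polar transform on a block\<close>

(* All random variables of the polar transform of length 2^n are functions of this finite-valued
   block, which turns their conditional quantities into entropies of finitely many weights. *)
definition block :: "(int \<Rightarrow> 'w \<Rightarrow> bool) \<Rightarrow> (int \<Rightarrow> 'w \<Rightarrow> 'y) \<Rightarrow> (int \<Rightarrow> 'w \<Rightarrow> 's) \<Rightarrow> nat \<Rightarrow> 'w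
    \<Rightarrow> bool list \<times> 'y list \<times> 's \<times> 's" where
  "block X Y S n w = (map (\<lambda>a. X (int a + 1) w) [0..<2 ^ n], map (\<lambda>a. Y (int a + 1) w) [0..<2 ^ n],
     S (2 ^ n) w, S 0 w)"

definition block_U :: "nat \<Rightarrow> nat \<Rightarrow> bool list \<times> 'y list \<times> 's \<times> 's \<Rightarrow> bool" where
  "block_U n c r = polar_U n (\<lambda>a. fst r ! a) c"

definition block_Q :: "nat \<Rightarrow> nat \<Rightarrow> bool list \<times> 'y list \<times> 's \<times> 's \<Rightarrow> bool list \<times> 'y list" where
  "block_Q n c r = (map (\<lambda>k. block_U n k r) [0..<c], fst (snd r))"

definition block_S :: "bool list \<times> 'y list \<times> 's \<times> 's \<Rightarrow> 's \<times> 's" where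
  "block_S r = snd (snd r)"

lemma Urv_eq_block_U: "Urv X n c w = block_U n c (block X Y S n w)"
  unfolding Urv_def block_U_def block_def polar_U_def by (intro arg_cong[where f="\<lambda>A. odd (card A)"]) auto

lemma Qrv_eq_block_Q: "Qrv X Y n c w = block_Q n c (block X Y S n w)"
  unfolding Qrv_def block_Q_def by (simp add: Urv_eq_block_U[of X n _ w Y S]) (simp add: block_def)

lemma Qhat_eq_block_Q_S: "Qhat X Y S n c w = (block_Q n c (block X Y S n w), block_S (block X Y S n w))"
  unfolding Qhat_def block_S_def by (simp add: Qrv_eq_block_Q[of X Y n c w S]) (simp add: block_def)

lemma simple_function_block:
  fixes X :: "int \<Rightarrow> 'w \<Rightarrow> bool" and Y :: "int \<Rightarrow> 'w \<Rightarrow> 'y::finite" and S :: "int \<Rightarrow> 'w \<Rightarrow> 's::finite"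
  assumes X: "\<And>j. X j \<in> measurable M (count_space UNIV)" and Y: "\<And>j. Y j \<in> measurable M (count_space UNIV)"
    and S: "\<And>j. S j \<in> measurable M (count_space UNIV)"
  shows "simple_function M (block X Y S n)"
  unfolding simple_function_def
proof
  have "block X Y S n ` space M \<subseteq> {xs. set xs \<subseteq> UNIV \<and> length xs = 2 ^ n}
      \<times> {ys. set ys \<subseteq> UNIV \<and> length ys = 2 ^ n} \<times> UNIV"
    unfolding block_def by auto
  moreover have "finite ({xs. set xs \<subseteq> (UNIV :: bool set) \<and> length xs = 2 ^ n}
      \<times> {ys. set ys \<subseteq> (UNIV :: 'y set) \<and> length ys = 2 ^ n} \<times> (UNIV :: ('s \<times> 's) set))"
    by (intro finite_cartesian_product finite_lists_length_eq) auto
  ultimately show "finite (block X Y S n ` space M)" by (rule finite_subset)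
  have level: "{w \<in> space M. f w = v} \<in> sets M" if "f \<in> measurable M (count_space UNIV)" for f :: "'w \<Rightarrow> 'b" and v
    using measurable_sets[OF that, of "{v}"] by (simp add: vimage_def Int_def conj_commute)
  show "\<forall>r\<in>block X Y S n ` space M. block X Y S n -` {r} \<inter> space M \<in> sets M"
  proof
    fix r :: "bool list \<times> 'y list \<times> 's \<times> 's"
    obtain xs ys s1 s0 where r: "r = (xs, ys, s1, s0)" by (cases r) auto
    have "block X Y S n -` {r} \<inter> space M = {w \<in> space M. length xs = 2 ^ n \<and> length ys = 2 ^ n
        \<and> (\<forall>a\<in>{..<2 ^ n}. X (int a + 1) w = xs ! a) \<and> (\<forall>a\<in>{..<2 ^ n}. Y (int a + 1) w = ys ! a)
        \<and> S (2 ^ n) w = s1 \<and> S 0 w = s0}"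
      unfolding block_def r by (auto simp: list_eq_iff_nth_eq)
    also have "\<dots> \<in> sets M"
      by (intro sets.sets_Collect_conj sets.sets_Collect_const sets.sets_Collect_finite_All level X Y S) auto
    finally show "block X Y S n -` {r} \<inter> space M \<in> sets M" .
  qed
qed

context
  fixes M :: "'w measure" and X :: "int \<Rightarrow> 'w \<Rightarrow> bool" and Y :: "int \<Rightarrow> 'w \<Rightarrow> 'y::finite"
    and S :: "int \<Rightarrow> 'w \<Rightarrow> 's::finite"
  assumes M: "prob_space M" and X: "\<And>j. X j \<in> measurable M (count_space UNIV)"
    and Y: "\<And>j. Y j \<in> measurable M (count_space UNIV)" and S: "\<And>j. S j \<in> measurable M (count_space UNIV)"
begin

interpretation block: finite_weights "block X Y S n ` space M" "point_prob M (block X Y S n)" for n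
  using M simple_function_block[OF X Y S] by (rule finite_weights_point_prob)

abbreviation block_entropy :: "nat \<Rightarrow> (bool list \<times> 'y list \<times> 's \<times> 's \<Rightarrow> 'v) \<Rightarrow> real" where
  "block_entropy n f \<equiv> fentropy (block X Y S n ` space M) (point_prob M (block X Y S n)) f"

lemma Hc_Qrv_eq_block_entropy:
  "Hc M (Urv X n c) (Qrv X Y n c)
    = block_entropy n (\<lambda>r. (block_U n c r, block_Q n c r)) - block_entropy n (block_Q n c)"
  using M simple_function_block[OF X Y S] Urv_eq_block_U Qrv_eq_block_Q by (rule Hc_eq_fentropy_diff)

lemma Hc_Qhat_eq_block_entropy:
  "Hc M (Urv X n c) (Qhat X Y S n c)
    = block_entropy n (\<lambda>r. (block_U n c r, block_Q n c r, block_S r))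
      - block_entropy n (\<lambda>r. (block_Q n c r, block_S r))"
  using M simple_function_block[OF X Y S] Urv_eq_block_U Qhat_eq_block_Q_S by (rule Hc_eq_fentropy_diff)

lemma Hc_Qhat_le_Hc_Qrv: "Hc M (Urv X n c) (Qhat X Y S n c) \<le> Hc M (Urv X n c) (Qrv X Y n c)"
  unfolding Hc_Qrv_eq_block_entropy Hc_Qhat_eq_block_entropy by (rule block.fentropy_conditioning_reduces)

(* H(U_c|Q_c) is the entropy increment from Q_c to Q_{c+1}, with or without (S_N, S_0) adjoined,
   so the sum telescopes to H(S_N,S_0|Q_1) - H(S_N,S_0|Q_{N+1}) \<le> log |S|^2. *)
lemma sum_Hc_gap_le:
  "(\<Sum>c<2 ^ n. Hc M (Urv X n c) (Qrv X Y n c) - Hc M (Urv X n c) (Qhat X Y S n c))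
    \<le> log 2 (real CARD('s \<times> 's))"
proof -
  define E where "E c = block_entropy n (block_Q n c)" for c
  define G where "G c = block_entropy n (\<lambda>r. (block_Q n c r, block_S r))" for c
  have E_Suc: "block_entropy n (\<lambda>r. (block_U n c r, block_Q n c r)) = E (Suc c)" for c
  proof -
    let ?g = "\<lambda>(x :: bool, (l, y :: 'y list)). (l @ [x], y)"
    have "inj ?g" by (auto simp: inj_def)
    have Q_Suc: "block_Q n (Suc c) = (\<lambda>r. ?g (block_U n c r, block_Q n c r))"
      by (auto simp: block_Q_def)
    show ?thesis unfolding E_def Q_Suc
      by (rule block.fentropy_comp_inj[symmetric], rule inj_on_subset[OF \<open>inj ?g\<close> subset_UNIV])
  qed
  have G_Suc: "block_entropy n (\<lambda>r. (block_U n c r, block_Q n c r, block_S r)) = G (Suc c)" for c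
  proof -
    let ?g = "\<lambda>(x :: bool, (l, y :: 'y list), t :: 's \<times> 's). ((l @ [x], y), t)"
    have "inj ?g" by (auto simp: inj_def)
    have QS_Suc: "(\<lambda>r. (block_Q n (Suc c) r, block_S r)) = (\<lambda>r. ?g (block_U n c r, block_Q n c r, block_S r))"
      by (auto simp: block_Q_def)
    show ?thesis unfolding G_def QS_Suc
      by (rule block.fentropy_comp_inj[symmetric], rule inj_on_subset[OF \<open>inj ?g\<close> subset_UNIV])
  qed
  have "(\<Sum>c<2 ^ n. Hc M (Urv X n c) (Qrv X Y n c) - Hc M (Urv X n c) (Qhat X Y S n c))
      = (\<Sum>c<2 ^ n. E (Suc c) - E c) - (\<Sum>c<2 ^ n. G (Suc c) - G c)"
    unfolding Hc_Qrv_eq_block_entropy Hc_Qhat_eq_block_entropy E_Suc G_Suc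
    by (simp add: sum_subtractf E_def G_def)
  also have "\<dots> = (G 0 - E 0) - (G (2 ^ n) - E (2 ^ n))"
    by (simp only: sum_lessThan_telescope)
  also have "\<dots> \<le> log 2 (card (block_S ` block X Y S n ` space M)) - 0"
    unfolding E_def G_def
    using block.fentropy_pair_le[where n = n and q = "block_Q n 0" and t = block_S]
      block.fentropy_comp_le[where n = n and g = fst and f = "\<lambda>r. (block_Q n (2 ^ n) r, block_S r)"]
    by (intro diff_mono) auto
  also have "\<dots> \<le> log 2 (real CARD('s \<times> 's))"
    using block.finite_R block.R_nonempty by (simp add: card_gt_0_iff card_mono del: card_prod)
  finally show ?thesis .
qed

lemma zkh_bounds_Qhat:
  "zkh_bounds (Zc M (Urv X n c) (Qhat X Y S n c)) (Kc M (Urv X n c) (Qhat X Y S n c))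
    (Hc M (Urv X n c) (Qhat X Y S n c))"
  using M simple_function_block[OF X Y S] Urv_eq_block_U Qhat_eq_block_Q_S by (rule zkh_bounds_Zc_Kc_Hc)

lemma zkh_bounds_Qrv: "zkh_bounds (Zc M (Urv X n c) (Qrv X Y n c)) (Kc M (Urv X n c) (Qrv X Y n c))
    (Hc M (Urv X n c) (Qrv X Y n c))"
  using M simple_function_block[OF X Y S] Urv_eq_block_U Qrv_eq_block_Q by (rule zkh_bounds_Zc_Kc_Hc)

end

lemma polarizes_diff:
  assumes "polarizes C h L" and g: "AE b in C. (\<lambda>n. g n b) \<longlonglongrightarrow> 0"
  shows "polarizes C (\<lambda>n b. h n b - g n b) L"
proof -
  from assms(1) have h: "AE b in C. (\<lambda>n. h n b) \<longlonglongrightarrow> L b" unfolding polarizes_def by simp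
  from h g have "AE b in C. (\<lambda>n. h n b - g n b) \<longlonglongrightarrow> L b"
  proof eventually_elim
    case (elim b)
    then show ?case using tendsto_diff[OF elim] by simp
  qed
  with assms(1) show ?thesis unfolding polarizes_def by simp
qed

lemma polarizes_zkh_bounds:
  assumes zkh: "\<And>n b. zkh_bounds (z n b) (k n b) (h n b)" and "polarizes C h L"
  shows "polarizes C z L" "polarizes C k (\<lambda>b. 1 - L b)"
proof -
  from \<open>polarizes C h L\<close> have h: "AE b in C. (\<lambda>n. h n b) \<longlonglongrightarrow> L b" and L: "AE b in C. L b \<in> {0, 1}"
    unfolding polarizes_def by auto
  from h L have "AE b in C. ((\<lambda>n. z n b) \<longlonglongrightarrow> L b \<and> (\<lambda>n. k n b) \<longlonglongrightarrow> 1 - L b) \<and> 1 - L b \<in> {0, 1}"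
    by eventually_elim (use zkh_bounds_tendsto[OF zkh] in auto)
  with \<open>polarizes C h L\<close> show "polarizes C z L" "polarizes C k (\<lambda>b. 1 - L b)"
    unfolding polarizes_def by (auto elim: AE_mp)
qed

theorem corollary2:
  fixes M :: "'w measure"
    and X :: "int \<Rightarrow> 'w \<Rightarrow> bool"
    and Y :: "int \<Rightarrow> 'w \<Rightarrow> 'y::finite"
    and S :: "int \<Rightarrow> 'w \<Rightarrow> 's::finite"
    and Hinf :: "(nat \<Rightarrow> bool) \<Rightarrow> real"
  assumes "faim M X Y S"
    and "polarizes coin (Hproc M X Y) Hinf"
  shows "(\<exists>Zinf Zhinf. polarizes coin (Zproc M X Y) Zinf \<and> polarizes coin (Zhat_proc M X Y S) Zhinf
            \<and> (AE b in coin. Zinf b = Hinf b) \<and> (AE b in coin. Zhinf b = Hinf b))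
       \<and> (\<exists>Kinf Khinf. polarizes coin (Kproc M X Y) Kinf \<and> polarizes coin (Khat_proc M X Y S) Khinf
            \<and> (AE b in coin. Kinf b = 1 - Hinf b) \<and> (AE b in coin. Khinf b = 1 - Hinf b))"
proof -
  from assms(1) have M: "prob_space M" and X: "\<And>j. X j \<in> measurable M (count_space UNIV)"
    and Y: "\<And>j. Y j \<in> measurable M (count_space UNIV)" and S: "\<And>j. S j \<in> measurable M (count_space UNIV)"
    unfolding faim_def by auto
  let ?gap = "\<lambda>n c. Hc M (Urv X n c) (Qrv X Y n c) - Hc M (Urv X n c) (Qhat X Y S n c)"
  have "AE b in coin. (\<lambda>n. ?gap n (idx n b)) \<longlonglongrightarrow> 0"
    using Hc_Qhat_le_Hc_Qrv[OF M X Y S] sum_Hc_gap_le[OF M X Y S] by (intro AE_coin_tendsto_zero) auto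
  from polarizes_diff[OF assms(2) this]
  have "polarizes coin (\<lambda>n b. Hc M (Urv X n (idx n b)) (Qhat X Y S n (idx n b))) Hinf"
    by (simp add: Hproc_def)
  with zkh_bounds_Qhat[OF M X Y S] have "polarizes coin (Zhat_proc M X Y S) Hinf"
    "polarizes coin (Khat_proc M X Y S) (\<lambda>b. 1 - Hinf b)"
    unfolding Zhat_proc_def Khat_proc_def by (rule polarizes_zkh_bounds)+
  moreover from zkh_bounds_Qrv[OF M X Y S] assms(2) have "polarizes coin (Zproc M X Y) Hinf"
    "polarizes coin (Kproc M X Y) (\<lambda>b. 1 - Hinf b)"
    unfolding Zproc_def Kproc_def Hproc_def by (rule polarizes_zkh_bounds)+
  ultimately show ?thesis by auto
qed

end
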